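(* For every $(i,j)\in\mathcal I_0$ we have $E_{ij}F_{\mathcal I_1}=F_{\mathcal I_1}E_{ij}$ in $U_q$.
   Context: Let $m,n\ge 1$, let $q$ be an indeterminate, and let indices range over $[1,m+n]$. Put $q_i=q$ if $i\le m$ and $q_i=q^{-1}$ if $i>m$. Let $\mathcal I_0=\{(i,j):1\le i<j\le m \text{ or } m+1\le i<j\le m+n\}$, $\mathcal I_1=\{(i,j):1\le i\le m<j\le m+n\}$. The quantum supergroup $U_q=U_q(\mathfrak{gl}(m|n))$ is the associative $\mathbb C(q)$-superalgebra generated by $K_j^{\pm1}$ ($j\in[1,m+n]$) and $E_{i,i+1},F_{i,i+1}$ ($1\le i<m+n$), where $K_j^{\pm1}$ and $E_{i,i+1},F_{i,i+1}$ for $i\ne m$ are even and $E_{m,m+1},F_{m,m+1}$ are odd, subject to: $K_iK_j=K_jK_i$, $K_iK_i^{-1}=1$; $K_iE_{j,j+1}K_i^{-1}=q_i^{\delta_{ij}-\delta_{i,j+1}}E_{j,j+1}$, $K_iF_{j,j+1}K_i^{-1}=q_i^{-(\delta_{ij}-\delta_{i,j+1})}F_{j,j+1}$; $[E_{i,i+1},F_{j,j+1}]=\delta_{ij}\frac{K_iK_{i+1}^{-1}-K_i^{-1}K_{i+1}}{q_i-q_i^{-1}}$; $E_{m,m+1}^2=F_{m,m+1}^2=0$; $E_{i,i+1}E_{j,j+1}=E_{j,j+1}E_{i,i+1}$ and $F_{i,i+1}F_{j,j+1}=F_{j,j+1}F_{i,i+1}$ for $|i-j|>1$; for $|i-j|=1$,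 $i\neq m$, and $X\in\{E,F\}$: $X_{i,i+1}^2X_{j,j+1}-(q+q^{-1})X_{i,i+1}X_{j,j+1}X_{i,i+1}+X_{j,j+1}X_{i,i+1}^2=0$; and $[E_{m-1,m+2},E_{m,m+1}]=[F_{m-1,m+2},F_{m,m+1}]=0$. Here for homogeneous $x,y$, $[x,y]=xy-(-1)^{\bar x\bar y}yx$. For $i<j$ with $j>i+1$, $E_{ij}=E_{ic}E_{cj}-q_c^{-1}E_{cj}E_{ic}$ and $F_{ij}=-q_cF_{ic}F_{cj}+F_{cj}F_{ic}$ for $i<c<j$ (independent of $c$); $E_{ij},F_{ij}$ are odd iff $(i,j)\in\mathcal I_1$. Order on $\mathcal I_1$: $(i,j)\prec(s,t)$ iff $j>t$, or $j=t$ and $i<s$. $F_{\mathcal I_1}$ is the product of all $F_{ij}$, $(i,j)\in\mathcal I_1$, taken in increasing $\prec$-order. *)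

theory Defs
  imports "HOL-Computational_Algebra.Polynomial" "HOL-Computational_Algebra.Fraction_Field"
begin

type_synonym ratq = "complex poly fract"

definition qq :: ratq where "qq = Fract [:0, 1:] 1"

definition qi :: "nat \<Rightarrow> nat \<Rightarrow> ratq" where
  "qi m i = (if i \<le> m then qq else inverse qq)"

definition kexp :: "nat \<Rightarrow> nat \<Rightarrow> int" where
  "kexp i j = (if i = j then 1 else 0) - (if i = j + 1 then 1 else 0)"

text \<open>Root vectors E_{i,i+k} (k >= 1), defined recursively with c = i+1:
  E_{ij} = E_{i,i+1} E_{i+1,j} - q_{i+1}^{-1} E_{i+1,j} E_{i,i+1}.
  Here E i stands for E_{i,i+1} and phi is the structure map C(q) -> A.\<close>
fun Eroot :: "(ratq \<Rightarrow> 'a::ring_1) \<Rightarrow> nat \<Rightarrow> (nat \<Rightarrow> 'a) \<Rightarrow> nat \<Rightarrow> nat \<Rightarrow> 'a" where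
  "Eroot phi m E i 0 = 0"
| "Eroot phi m E i (Suc 0) = E i"
| "Eroot phi m E i (Suc (Suc k)) =
     E i * Eroot phi m E (i + 1) (Suc k)
     - phi (inverse (qi m (i + 1))) * Eroot phi m E (i + 1) (Suc k) * E i"

fun Froot :: "(ratq \<Rightarrow> 'a::ring_1) \<Rightarrow> nat \<Rightarrow> (nat \<Rightarrow> 'a) \<Rightarrow> nat \<Rightarrow> nat \<Rightarrow> 'a" where
  "Froot phi m F i 0 = 0"
| "Froot phi m F i (Suc 0) = F i"
| "Froot phi m F i (Suc (Suc k)) =
     - (phi (qi m (i + 1)) * F i * Froot phi m F (i + 1) (Suc k))
     + Froot phi m F (i + 1) (Suc k) * F i"

definition Eij :: "(ratq \<Rightarrow> 'a::ring_1) \<Rightarrow> nat \<Rightarrow> (nat \<Rightarrow> 'a) \<Rightarrow> nat \<Rightarrow> nat \<Rightarrow> 'a" where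
  "Eij phi m E i j = Eroot phi m E i (j - i)"

definition Fij :: "(ratq \<Rightarrow> 'a::ring_1) \<Rightarrow> nat \<Rightarrow> (nat \<Rightarrow> 'a) \<Rightarrow> nat \<Rightarrow> nat \<Rightarrow> 'a" where
  "Fij phi m F i j = Froot phi m F i (j - i)"

definition I0 :: "nat \<Rightarrow> nat \<Rightarrow> (nat \<times> nat) set" where
  "I0 m n = {(i, j). (1 \<le> i \<and> i < j \<and> j \<le> m) \<or> (m + 1 \<le> i \<and> i < j \<and> j \<le> m + n)}"

definition I1 :: "nat \<Rightarrow> nat \<Rightarrow> (nat \<times> nat) set" where
  "I1 m n = {(i, j). 1 \<le> i \<and> i \<le> m \<and> m < j \<and> j \<le> m + n}"

text \<open>I_1 listed in increasing order: (i,j) < (s,t) iff j > t, or j = t and i < s.\<close>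
definition I1_list :: "nat \<Rightarrow> nat \<Rightarrow> (nat \<times> nat) list" where
  "I1_list m n = concat (map (\<lambda>j. map (\<lambda>i. (i, j)) [1..<m + 1]) (rev [m + 1..<m + n + 1]))"

definition FI1 :: "(ratq \<Rightarrow> 'a::ring_1) \<Rightarrow> nat \<Rightarrow> nat \<Rightarrow> (nat \<Rightarrow> 'a) \<Rightarrow> 'a" where
  "FI1 phi m n F = prod_list (map (\<lambda>(i, j). Fij phi m F i j) (I1_list m n))"

text \<open>The defining relations of U_q(gl(m|n)) realised in an associative unital C(q)-algebra A
  (a ring A with a ring homomorphism phi : C(q) -> A into the centre of A).
  K i = K_i, Kinv i = K_i^{-1}, E i = E_{i,i+1}, F i = F_{i,i+1}.
  Supercommutators are written out using the parities (only E_{m,m+1}, F_{m,m+1},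
  and E_{m-1,m+2} are odd among the elements occurring).\<close>
definition uq_rels :: "nat \<Rightarrow> nat \<Rightarrow> (ratq \<Rightarrow> 'a::ring_1) \<Rightarrow> (nat \<Rightarrow> 'a) \<Rightarrow> (nat \<Rightarrow> 'a)
    \<Rightarrow> (nat \<Rightarrow> 'a) \<Rightarrow> (nat \<Rightarrow> 'a) \<Rightarrow> bool" where
  "uq_rels m n phi K Kinv E F \<longleftrightarrow>
     \<comment> \<open>C(q)-algebra structure\<close>
     phi 0 = 0 \<and> phi 1 = 1 \<and>
     (\<forall>a b. phi (a + b) = phi a + phi b) \<and>
     (\<forall>a b. phi (a * b) = phi a * phi b) \<and>
     (\<forall>a x. phi a * x = x * phi a) \<and>
     \<comment> \<open>Cartan part\<close>
     (\<forall>i\<in>{1..m+n}. \<forall>j\<in>{1..m+n}. K i * K j = K j * K i) \<and>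
     (\<forall>i\<in>{1..m+n}. K i * Kinv i = 1 \<and> Kinv i * K i = 1) \<and>
     (\<forall>i\<in>{1..m+n}. \<forall>j\<in>{1..<m+n}.
        K i * E j * Kinv i = phi (qi m i powi kexp i j) * E j \<and>
        K i * F j * Kinv i = phi (qi m i powi (- kexp i j)) * F j) \<and>
     \<comment> \<open>[E_i, F_j] = delta_ij (K_i K_{i+1}^{-1} - K_i^{-1} K_{i+1}) / (q_i - q_i^{-1})\<close>
     (\<forall>i\<in>{1..<m+n}. \<forall>j\<in>{1..<m+n}.
        E i * F j - (if i = m \<and> j = m then -1 else 1) * (F j * E i) =
        (if i = j then phi (inverse (qi m i - inverse (qi m i)))
                       * (K i * Kinv (i + 1) - Kinv i * K (i + 1))
         else 0)) \<and>
     E m * E m = 0 \<and> F m * F m = 0 \<and>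
     (\<forall>i\<in>{1..<m+n}. \<forall>j\<in>{1..<m+n}. (i + 1 < j \<or> j + 1 < i) \<longrightarrow>
        E i * E j = E j * E i \<and> F i * F j = F j * F i) \<and>
     \<comment> \<open>Serre relations\<close>
     (\<forall>i\<in>{1..<m+n}. \<forall>j\<in>{1..<m+n}. (i = j + 1 \<or> j = i + 1) \<and> i \<noteq> m \<longrightarrow>
        E i * E i * E j - phi (qq + inverse qq) * (E i * E j * E i) + E j * E i * E i = 0 \<and>
        F i * F i * F j - phi (qq + inverse qq) * (F i * F j * F i) + F j * F i * F i = 0) \<and>
     \<comment> \<open>[E_{m-1,m+2}, E_{m,m+1}] = 0 (both odd, so anticommutator); only meaningful if m,n >= 2\<close>
     (2 \<le> m \<and> 2 \<le> n \<longrightarrow>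
        Eij phi m E (m - 1) (m + 2) * E m + E m * Eij phi m E (m - 1) (m + 2) = 0 \<and>
        Fij phi m F (m - 1) (m + 2) * F m + F m * Fij phi m F (m - 1) (m + 2) = 0)"

end

(*
  F_{I_1} is the product of the blocks B_j = F_{1j} ... F_{mj}, taken for j = m+n down to m+1.
  Since E_{ij} with (i,j) in I_0 is a polynomial in the even generators E_k (k <> m), it suffices
  that each such E_k commutes with F_{I_1}. Now E_k commutes with every F_{ij} except F_{kj}
  (for k < m) and F_{i,k+1} (for k > m), and there the commutator is a Cartan element times
  F_{k+1,j}, resp. F_{ik}. These error terms are killed inside the product: for k < m because
  F_{k+1,j} follows F_{kj} in B_j and odd root vectors square to zero; for k > m because F_{ik}
  annihilates the tail of B_{k+1} B_k that follows F_{i,k+1}. The latter rests on F_{ik}^2 = 0,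
  on F_{ik} q-commuting with the F_{pk}, and on an exchange relation between F_{ik} and
  F_{l,k+1}; all of these come from the Serre relations and the quartic relation
  [F_{m-1,m+2}, F_{m,m+1}] = 0.
*)

theory Submission
  imports Defs
begin

section \<open>The parameter q\<close>

lemma qq_nonzero: "qq \<noteq> 0"
  unfolding qq_def by (simp add: eq_fract Zero_fract_def)

lemma one_plus_qq_square_nonzero: "1 + qq * qq \<noteq> 0"
proof
  assume "1 + qq * qq = 0"
  then have "qq * qq = -1" by (simp add: add_eq_0_iff add.commute)
  then show False unfolding qq_def by (simp add: eq_fract One_fract_def one_pCons)
qed

lemma qq_plus_inverse_nonzero: "qq + inverse qq \<noteq> 0"
proof
  assume "qq + inverse qq = 0"
  then have "qq * (qq + inverse qq) = 0" by simp
  then show False using qq_nonzero one_plus_qq_square_nonzero by (simp add: algebra_simps)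
qed

lemma qi_nonzero [simp]: "qi m i \<noteq> 0"
  by (simp add: qi_def qq_nonzero)

lemma qi_plus_inverse: "qi m i + inverse (qi m i) = qq + inverse qq"
  by (simp add: qi_def)

lemma one_plus_qi_square_nonzero: "1 + qi m i * qi m i \<noteq> 0"
proof (cases "i \<le> m")
  case False
  have "1 + inverse qq * inverse qq = inverse (qq * qq) * (1 + qq * qq)"
    using qq_nonzero by (simp add: field_simps)
  with False show ?thesis using qq_nonzero one_plus_qq_square_nonzero by (simp add: qi_def)
qed (simp add: qi_def one_plus_qq_square_nonzero)

lemma qi_quadratic: "qi m i * qi m i - qi m i * (qq + inverse qq) + 1 = 0"
  using qq_nonzero by (simp add: qi_def algebra_simps)

section \<open>Commutation in rings\<close>

lemma mult_assoc_eq: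
  fixes a b c t :: "'a :: semigroup_mult"
  assumes "a * b = c"
  shows "a * (b * t) = c * t"
  using assms by (simp add: mult.assoc[symmetric])

lemma commute_mult:
  fixes e :: "'a :: semigroup_mult"
  assumes "e * a = a * e" and "e * b = b * e"
  shows "e * (a * b) = a * b * e"
  by (metis assms mult.assoc)

lemma commute_prod_list:
  fixes e :: "'a :: monoid_mult"
  assumes "\<And>x. x \<in> set xs \<Longrightarrow> e * x = x * e"
  shows "e * prod_list xs = prod_list xs * e"
  using assms by (induction xs) (simp_all add: commute_mult)

lemma commute_mult_annihilated_correction:
  fixes e :: "'a :: ring"
  assumes "e * x = x * e + h * y" and "y * z = 0" and "e * z = z * e"
  shows "e * (x * z) = x * z * e"
  by (simp add: mult.assoc[symmetric] assms distrib_right) (simp add: mult.assoc assms)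

lemma rev_upt_split_pair:
  assumes "i \<le> k" "k + 1 < j"
  shows "rev [i..<j] = rev [k + 2..<j] @ [k + 1, k] @ rev [i..<k]"
proof -
  have "[i..<j] = [i..<k] @ [k..<j]"
    using upt_add_eq_append[of i k "j - k"] assms by simp
  also have "[k..<j] = k # (k + 1) # [k + 2..<j]"
    using assms by (simp add: upt_conv_Cons)
  finally show ?thesis by simp
qed

lemma Eroot_commute:
  fixes X :: "'a::ring_1"
  assumes "\<And>a. phi a * X = X * phi a" and "\<And>l. i \<le> l \<Longrightarrow> l < i + d \<Longrightarrow> E l * X = X * E l"
  shows "Eroot phi m E i d * X = X * Eroot phi m E i d"
  using assms
proof (induction phi m E i d rule: Eroot.induct)
  case (3 phi m E i k)
  let ?R = "Eroot phi m E (i + 1) (Suc k)" and ?c = "phi (inverse (qi m (i + 1)))"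
  have R: "X * ?R = ?R * X" using 3 by simp
  have Ei: "X * E i = E i * X" using "3.prems"(2)[of i] by simp
  have "X * (E i * ?R) = E i * ?R * X"
    using Ei R by (rule commute_mult)
  moreover have "X * (?c * ?R * E i) = ?c * ?R * E i * X"
    using "3.prems"(1) R Ei by (intro commute_mult) auto
  ultimately show ?case by (simp add: right_diff_distrib left_diff_distrib)
qed simp_all

section \<open>q-brackets in an algebra with central scalars\<close>

locale central_algebra =
  fixes phi :: "'k::field \<Rightarrow> 'a::ring_1"
  assumes phi_one [simp]: "phi 1 = 1"
    and phi_add: "phi (a + b) = phi a + phi b"
    and phi_mult: "phi (a * b) = phi a * phi b"
    and phi_central: "phi a * x = x * phi a"
begin

lemma phi_zero [simp]: "phi 0 = 0"
  using phi_add[of 0 0] by simp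

lemma phi_minus: "phi (- a) = - phi a"
  using phi_add[of a "- a"] minus_unique[of "phi a" "phi (- a)"] by simp

lemma phi_diff: "phi (a - b) = phi a - phi b"
  using phi_add[of a "- b"] by (simp add: phi_minus)

lemma phi_mult_phi: "phi a * phi b = phi (a * b)"
  by (simp add: phi_mult)

lemma phi_mult_phi_assoc: "phi a * (phi b * x) = phi (a * b) * x"
  by (simp add: phi_mult mult.assoc)

lemma mult_phi: "NO_MATCH (phi b) x \<Longrightarrow> x * phi a = phi a * x"
  by (simp add: phi_central)

lemma mult_phi_assoc: "NO_MATCH (phi b) x \<Longrightarrow> x * (phi a * y) = phi a * (x * y)"
  by (metis mult.assoc phi_central)

lemmas phi_simps = phi_mult_phi phi_mult_phi_assoc mult_phi mult_phi_assoc

definition qbr :: "'k \<Rightarrow> 'a \<Rightarrow> 'a \<Rightarrow> 'a" where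
  "qbr s x y = y * x - phi s * (x * y)"

definition serre :: "'k \<Rightarrow> 'a \<Rightarrow> 'a \<Rightarrow> bool" where
  "serre c x y \<longleftrightarrow> x * x * y - phi c * (x * y * x) + y * x * x = 0"

lemma skew_commute_inverse:
  assumes "X * x = phi a * (x * X)" and "a \<noteq> 0"
  shows "x * X = phi (inverse a) * (X * x)"
  using assms by (simp add: phi_simps)

lemma skew_commute_mult:
  assumes "x * u = phi a * (u * x)" and "x * v = phi b * (v * x)"
  shows "x * (u * v) = phi (a * b) * (u * v * x)"
  by (simp add: mult.assoc[symmetric] assms) (simp add: mult.assoc phi_simps assms)

lemma skew_commute_qbr:
  assumes "X * x = phi a * (x * X)" and "X * y = phi b * (y * X)"
  shows "X * qbr s x y = phi (a * b) * (qbr s x y * X)"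
  by (simp add: qbr_def algebra_simps phi_simps assms mult_assoc_eq[OF assms(1)] mult_assoc_eq[OF assms(2)])

lemma qbr_skew_commute:
  assumes "x * X = phi a * (X * x)" and "y * X = phi b * (X * y)"
  shows "qbr s x y * X = phi (a * b) * (X * qbr s x y)"
  by (simp add: qbr_def algebra_simps phi_simps assms mult_assoc_eq[OF assms(1)] mult_assoc_eq[OF assms(2)])

lemma commute_qbr:
  assumes "X * x = x * X" and "X * y = y * X"
  shows "X * qbr s x y = qbr s x y * X"
  using skew_commute_qbr[of X x 1 y 1 s] assms by simp

lemma qbr_assoc:
  assumes "x * z = z * x"
  shows "qbr s x (qbr t y z) = qbr t (qbr s x y) z"
  by (simp add: qbr_def algebra_simps phi_simps assms mult_assoc_eq[OF assms])

lemma serre_qbr_left: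
  assumes "serre c x u" and "x * w = w * x"
  shows "serre c x (qbr s u w)"
proof -
  have "x * x * qbr s u w - phi c * (x * qbr s u w * x) + qbr s u w * x * x
      = - (phi s * ((x * x * u - phi c * (x * u * x) + u * x * x) * w))
        + w * (x * x * u - phi c * (x * u * x) + u * x * x)"
    by (simp add: qbr_def algebra_simps phi_simps assms(2) mult_assoc_eq[OF assms(2)])
  then show ?thesis using assms(1) by (simp add: serre_def)
qed

lemma serre_qbr_right:
  assumes "serre c x u" and "x * w = w * x"
  shows "serre c x (qbr s w u)"
proof -
  have "x * x * qbr s w u - phi c * (x * qbr s w u * x) + qbr s w u * x * x
      = - (phi s * (w * (x * x * u - phi c * (x * u * x) + u * x * x)))
        + (x * x * u - phi c * (x * u * x) + u * x * x) * w"
    by (simp add: qbr_def algebra_simps phi_simps assms(2) mult_assoc_eq[OF assms(2)])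
  then show ?thesis using assms(1) by (simp add: serre_def)
qed

lemma serre_square_zero_identities:
  assumes yy: "y * y = 0" and S: "serre c x y" and c: "c \<noteq> 0"
  shows "x * (y * (x * y)) = y * (x * (y * x))"
    and "y * (x * (x * y)) = phi c * (y * (x * (y * x)))"
proof -
  have yy': "y * (y * t) = 0" for t using yy by (metis mult.assoc mult_zero_left)
  have S': "x * x * y - phi c * (x * y * x) + y * x * x = 0" using S by (simp add: serre_def)
  have "y * (x * x * y - phi c * (x * y * x) + y * x * x) = 0" using S' by simp
  then show left: "y * (x * (x * y)) = phi c * (y * (x * (y * x)))"
    by (simp add: algebra_simps phi_simps yy')
  have "(x * x * y - phi c * (x * y * x) + y * x * x) * y = 0" using S' by simp
  then have "y * (x * (x * y)) = phi c * (x * (y * (x * y)))"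
    by (simp add: algebra_simps phi_simps yy yy')
  with left have "phi (inverse c) * (phi c * (x * (y * (x * y))))
      = phi (inverse c) * (phi c * (y * (x * (y * x))))" by simp
  then show "x * (y * (x * y)) = y * (x * (y * x))" using c by (simp add: phi_simps)
qed

text \<open>Both squares below reduce to \<open>(s\<^sup>2 - s c + 1) y x y x\<close>.\<close>

lemma qbr_square_zero:
  assumes "y * y = 0" and "serre c x y" and "c \<noteq> 0" and s: "s * s - s * c + 1 = 0"
  shows "qbr s x y * qbr s x y = 0" and "qbr s y x * qbr s y x = 0"
proof -
  have yy': "y * (y * t) = 0" for t using assms(1) by (metis mult.assoc mult_zero_left)
  note core = serre_square_zero_identities[OF assms(1-3)]
  let ?B = "y * (x * (y * x))"
  have "phi (s * s) * ?B - phi (s * c) * ?B + ?B = phi (s * s - s * c + 1) * ?B"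
    by (simp add: phi_add phi_diff algebra_simps)
  also have "\<dots> = 0" using s by simp
  finally have B: "phi (s * s) * ?B - phi (s * c) * ?B + ?B = 0" .
  have "qbr s x y * qbr s x y = phi (s * s) * ?B - phi (s * c) * ?B + ?B"
    by (simp add: qbr_def algebra_simps phi_simps yy' core)
  then show "qbr s x y * qbr s x y = 0" using B by simp
  have "qbr s y x * qbr s y x = phi (s * s) * ?B - phi (s * c) * ?B + ?B"
    by (simp add: qbr_def algebra_simps phi_simps yy' core)
  then show "qbr s y x * qbr s y x = 0" using B by simp
qed

text \<open>For \<open>y = F\<^sub>l\<close> with \<open>l \<noteq> m\<close> this is the relation \<open>[F\<^sub>l, F\<^sub>l\<^sub>-\<^sub>1\<^sub>,\<^sub>l\<^sub>+\<^sub>2] = 0\<close>.\<close>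

lemma commute_qbr_qbr_of_serre:
  assumes S1: "serre c y x" and S2: "serre c y z" and xz: "x * z = z * x"
    and c: "c = s + inverse s" and s: "s \<noteq> 0" "1 + s * s \<noteq> 0"
  shows "y * qbr s x (qbr s y z) = qbr s x (qbr s y z) * y"
proof -
  define u where "u = qbr s y z"
  define v where "v = qbr s x y"
  define W where "W = qbr s x u"
  have W_right: "W = qbr s v z"
    unfolding W_def u_def v_def by (rule qbr_assoc[OF xz])
  have "v * y - phi s * (y * v) = - (phi s * (y * y * x - phi c * (y * x * y) + x * y * y))"
    using s by (simp add: v_def qbr_def c algebra_simps phi_simps phi_add)
  then have vy: "v * y = phi s * (y * v)" using S1 by (simp add: serre_def)
  have "y * u - phi s * (u * y) = - (phi s * (y * y * z - phi c * (y * z * y) + z * y * y))"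
    using s by (simp add: u_def qbr_def c algebra_simps phi_simps phi_add)
  then have "y * u = phi s * (u * y)" using S2 by (simp add: serre_def)
  then have uy: "u * y = phi (inverse s) * (y * u)" using s by (simp add: phi_simps)
  have zy: "z * y = u + phi s * (y * z)" by (simp add: u_def qbr_def mult.assoc)
  have zy': "z * (y * t) = u * t + phi s * (y * (z * t))" for t
    using arg_cong[OF zy, of "\<lambda>a. a * t"] by (simp add: algebra_simps phi_simps)
  have Wy: "W * y = phi s * (u * v) - phi s * (v * u) + phi (s * s) * (y * W)"
    by (simp add: W_right qbr_def algebra_simps phi_simps vy mult_assoc_eq[OF vy] zy zy')
  have uv: "u * v = - (phi s * (W * y)) + phi (inverse s) * (y * W) + v * u"
    using s by (simp add: W_def v_def qbr_def algebra_simps phi_simps uy mult_assoc_eq[OF uy])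
  have "W * y = - (phi (s * s) * (W * y)) + y * W + phi (s * s) * (y * W)"
    using Wy s by (simp add: uv algebra_simps phi_simps)
  then have "phi (1 + s * s) * (W * y) = phi (1 + s * s) * (y * W)"
    by (simp add: phi_add algebra_simps)
  then have "phi (inverse (1 + s * s)) * (phi (1 + s * s) * (W * y))
      = phi (inverse (1 + s * s)) * (phi (1 + s * s) * (y * W))" by simp
  then show ?thesis using s by (simp add: W_def u_def phi_simps)
qed

lemma qbr_exchange:
  assumes hby: "b * y = phi c * (y * b)" and yA: "y * qbr s b f = phi d * (qbr s b f * y)"
    and s: "s \<noteq> 0"
  shows "b * qbr s y f = phi (inverse s * c) * (qbr s y f * b) + phi (c * d - inverse s) * (qbr s b f * y)"
proof -
  let ?A = "qbr s b f"
  have "b * f = phi (inverse s) * (phi s * (b * f))" using s by (simp add: phi_simps)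
  then have bf: "b * f = phi (inverse s) * (f * b - ?A)" by (simp add: qbr_def)
  have bf': "b * (f * t) = phi (inverse s) * (f * (b * t) - ?A * t)" for t
    using arg_cong[OF bf, of "\<lambda>z. z * t"] by (simp add: algebra_simps)
  show ?thesis
    using s by (simp add: qbr_def[of s y f] algebra_simps phi_simps bf bf' hby mult_assoc_eq[OF hby]
        yA mult_assoc_eq[OF yA] phi_diff)
qed

lemma commutator_qbr_left_cartan:
  assumes ef: "e * f = f * e + phi r * (h - h')" and ey: "e * y = y * e"
    and yh: "y * h = phi (inverse s) * (h * y)" and yh': "y * h' = phi s * (h' * y)"
  shows "e * qbr s f y = qbr s f y * e + phi (r * inverse s - s * r) * (h * y)"
  by (simp add: qbr_def algebra_simps phi_simps phi_diff ef mult_assoc_eq[OF ef] ey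
      mult_assoc_eq[OF ey] yh yh')

lemma commutator_qbr_right_cartan:
  assumes ex: "e * x = x * e" and ef: "e * f = f * e + phi r * (h - h')"
    and xh: "x * h = phi (inverse s) * (h * x)" and xh': "x * h' = phi s * (h' * x)"
    and s: "s \<noteq> 0"
  shows "e * qbr s x f = qbr s x f * e + phi (r * (s * s - 1)) * (h' * x)"
  using s by (simp add: qbr_def algebra_simps phi_simps phi_diff ex mult_assoc_eq[OF ex] ef
      mult_assoc_eq[OF ef] xh mult_assoc_eq[OF xh] xh' mult_assoc_eq[OF xh'])

lemma commutator_qbr_propagate:
  assumes ex: "e * x = x * e" and ew: "e * w = w * e + phi g * (h * v)" and xh: "x * h = h * x"
  shows "e * qbr s x w = qbr s x w * e + phi g * (h * qbr s x v)"
  by (simp add: qbr_def algebra_simps phi_simps ex mult_assoc_eq[OF ex] ew mult_assoc_eq[OF ew]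
      xh mult_assoc_eq[OF xh])

lemma commute_qbr_cancel_correction:
  assumes ex: "e * x = x * e" and ew: "e * w = w * e + phi c * (h * y)"
    and xh: "x * h = phi (inverse s) * (h * x)" and xy: "x * y = y * x" and s: "s \<noteq> 0"
  shows "e * qbr s x w = qbr s x w * e"
  using s by (simp add: qbr_def algebra_simps phi_simps ex mult_assoc_eq[OF ex] ew mult_assoc_eq[OF ew]
      xh mult_assoc_eq[OF xh] xy mult_assoc_eq[OF xy])

lemma square_zero_skew_commute_qbr:
  assumes "y * y = 0"
  shows "y * qbr s x y = phi (- s) * (qbr s x y * y)"
proof -
  have "y * (y * t) = 0" for t using assms by (metis mult.assoc mult_zero_left)
  then show ?thesis using assms by (simp add: qbr_def algebra_simps phi_simps phi_minus)
qed

end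

section \<open>Root vectors of \<open>U\<^sub>q(gl(m|n))\<close>\<close>

locale uq_algebra =
  fixes m n :: nat and phi :: "ratq \<Rightarrow> 'a::ring_1" and K Kinv E F :: "nat \<Rightarrow> 'a"
  assumes rels: "uq_rels m n phi K Kinv E F"

sublocale uq_algebra \<subseteq> central_algebra phi
  by unfold_locales (use rels in \<open>unfold uq_rels_def, elim conjE, blast\<close>)+

context uq_algebra
begin

abbreviation H :: "nat \<Rightarrow> 'a" where "H k \<equiv> K k * Kinv (k + 1)"
abbreviation Hinv :: "nat \<Rightarrow> 'a" where "Hinv k \<equiv> Kinv k * K (k + 1)"
abbreviation FF :: "nat \<Rightarrow> nat \<Rightarrow> 'a" where "FF i j \<equiv> Fij phi m F i j"

lemma Kinv_K: "i \<in> {1..m+n} \<Longrightarrow> Kinv i * K i = 1"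
  using rels unfolding uq_rels_def by (elim conjE) blast

lemma K_F_Kinv: "i \<in> {1..m+n} \<Longrightarrow> j \<in> {1..<m+n} \<Longrightarrow>
    K i * F j * Kinv i = phi (qi m i powi (- kexp i j)) * F j"
  using rels unfolding uq_rels_def by (elim conjE) blast

lemma E_F_commutator: "i \<in> {1..<m+n} \<Longrightarrow> j \<in> {1..<m+n} \<Longrightarrow>
    E i * F j - (if i = m \<and> j = m then -1 else 1) * (F j * E i) =
    (if i = j then phi (inverse (qi m i - inverse (qi m i))) * (H i - Hinv i) else 0)"
  using rels unfolding uq_rels_def by (elim conjE) blast

lemma F_m_square: "F m * F m = 0"
  using rels unfolding uq_rels_def by (elim conjE) blast

lemma F_commute_far: "i \<in> {1..<m+n} \<Longrightarrow> j \<in> {1..<m+n} \<Longrightarrow> i + 1 < j \<or> j + 1 < i \<Longrightarrow>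
    F i * F j = F j * F i"
  using rels unfolding uq_rels_def by (elim conjE) blast

lemma serre_F: "i \<in> {1..<m+n} \<Longrightarrow> j \<in> {1..<m+n} \<Longrightarrow> i = j + 1 \<or> j = i + 1 \<Longrightarrow> i \<noteq> m \<Longrightarrow>
    serre (qq + inverse qq) (F i) (F j)"
  using rels unfolding uq_rels_def serre_def by (elim conjE) blast

lemma F_quartic: "2 \<le> m \<Longrightarrow> 2 \<le> n \<Longrightarrow> FF (m - 1) (m + 2) * F m + F m * FF (m - 1) (m + 2) = 0"
  using rels unfolding uq_rels_def by (elim conjE) blast

lemma E_F_commute: "i \<in> {1..<m+n} \<Longrightarrow> j \<in> {1..<m+n} \<Longrightarrow> i \<noteq> j \<Longrightarrow> E i * F j = F j * E i"
  using E_F_commutator[of i j] by auto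

lemma E_F_same: "1 \<le> k \<Longrightarrow> k < m + n \<Longrightarrow> k \<noteq> m \<Longrightarrow>
    E k * F k = F k * E k + phi (inverse (qi m k - inverse (qi m k))) * (H k - Hinv k)"
  using E_F_commutator[of k k] by (simp add: algebra_simps)

lemma F_Kinv:
  assumes "i \<in> {1..m+n}" "j \<in> {1..<m+n}"
  shows "F j * Kinv i = phi (qi m i powi (- kexp i j)) * (Kinv i * F j)"
proof -
  have "F j * Kinv i = Kinv i * (K i * F j * Kinv i)"
    using Kinv_K[OF assms(1)] by (simp add: mult.assoc[symmetric])
  then show ?thesis using K_F_Kinv[OF assms] by (simp add: phi_simps)
qed

lemma F_K:
  assumes "i \<in> {1..m+n}" "j \<in> {1..<m+n}"
  shows "F j * K i = phi (qi m i powi kexp i j) * (K i * F j)"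
proof -
  have "K i * F j = (K i * F j * Kinv i) * K i"
    using Kinv_K[OF assms(1)] by (simp add: mult.assoc)
  also have "\<dots> = phi (qi m i powi (- kexp i j)) * (F j * K i)"
    using K_F_Kinv[OF assms] by (simp add: mult.assoc)
  finally have "K i * F j = phi (qi m i powi (- kexp i j)) * (F j * K i)" .
  from skew_commute_inverse[OF this] show ?thesis by (simp add: power_int_minus)
qed

lemma F_H:
  assumes "1 \<le> k" "k < m + n" "l \<in> {1..<m+n}"
  shows "F l * H k = phi (qi m k powi kexp k l * qi m (k+1) powi (- kexp (k+1) l)) * (H k * F l)"
  using assms by (intro skew_commute_mult F_K F_Kinv) auto

lemma F_Hinv:
  assumes "1 \<le> k" "k < m + n" "l \<in> {1..<m+n}"
  shows "F l * Hinv k = phi (qi m k powi (- kexp k l) * qi m (k+1) powi kexp (k+1) l) * (Hinv k * F l)"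
  using assms by (intro skew_commute_mult F_K F_Kinv) auto

lemma FF_Suc [simp]: "FF i (Suc i) = F i"
  by (simp add: Fij_def)

lemma FF_empty: "j \<le> i \<Longrightarrow> FF i j = 0"
  by (simp add: Fij_def)

lemma FF_qbr_first:
  assumes "i + 2 \<le> j"
  shows "FF i j = qbr (qi m (i + 1)) (F i) (FF (i + 1) j)"
proof -
  define d where "d = j - i - 2"
  have "j - i = Suc (Suc d)" and "j - (i + 1) = Suc d"
    using assms by (simp_all add: d_def)
  then show ?thesis by (simp add: Fij_def qbr_def algebra_simps)
qed

lemma FF_skew_commute:
  assumes "i < j" and F_X: "\<And>l. i \<le> l \<Longrightarrow> l < j \<Longrightarrow> F l * X = phi (w l) * (X * F l)"
  shows "FF i j * X = phi (\<Prod>l\<in>{i..<j}. w l) * (X * FF i j)"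
proof -
  from assms(1) have "i \<le> j - 1" by simp
  then show ?thesis
  proof (induction i rule: inc_induct)
    case base
    define j' where "j' = j - 1"
    have "j = Suc j'" using assms(1) by (simp add: j'_def)
    then show ?case using F_X[of j'] assms(1) by simp
  next
    case (step p)
    then have "p + 2 \<le> j" by simp
    moreover have "(\<Prod>l\<in>{p..<j}. w l) = w p * (\<Prod>l\<in>{Suc p..<j}. w l)"
      using step by (simp add: prod.atLeast_Suc_lessThan)
    ultimately show ?case
      using qbr_skew_commute[OF F_X[of p] step.IH] step by (simp add: FF_qbr_first)
  qed
qed

lemma FF_commute:
  assumes "\<And>l. i \<le> l \<Longrightarrow> l < j \<Longrightarrow> X * F l = F l * X"
  shows "X * FF i j = FF i j * X"
proof (cases "i < j")
  case True
  have "FF i j * X = phi (\<Prod>l\<in>{i..<j}. 1) * (X * FF i j)"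
    by (rule FF_skew_commute[OF True]) (simp add: assms)
  then show ?thesis by simp
qed (simp add: FF_empty)

lemma F_commute_FF:
  assumes "1 \<le> i" "j \<le> m + n" "1 \<le> p" "p < m + n" "p + 1 < i \<or> j < p"
  shows "F p * FF i j = FF i j * F p"
  by (rule FF_commute) (use assms in \<open>auto intro!: F_commute_far\<close>)

lemma FF_qbr_last:
  assumes "1 \<le> i" "i + 2 \<le> j" "j \<le> m + n"
  shows "FF i j = qbr (qi m (j - 1)) (FF i (j - 1)) (F (j - 1))"
proof -
  from assms(2) have "i \<le> j - 2" by simp
  then show ?thesis using assms(1)
  proof (induction i rule: inc_induct)
    case base
    define j' where "j' = j - 2"
    have "j = Suc (Suc j')" using assms(2) by (simp add: j'_def)
    then show ?case using FF_qbr_first[of j' j] by simp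
  next
    case (step p)
    have "F p * F (j - 1) = F (j - 1) * F p"
      using step assms by (intro F_commute_far) auto
    then show ?case
      using step FF_qbr_first[of p j] FF_qbr_first[of p "j - 1"] by (simp add: qbr_assoc)
  qed
qed

lemma serre_F_FF_last:
  assumes "1 \<le> a" "a < c" "c < m + n" "c \<noteq> m"
  shows "serre (qq + inverse qq) (F c) (FF a c)"
proof -
  have S: "serre (qq + inverse qq) (F c) (F (c - 1))"
    using assms by (intro serre_F) auto
  show ?thesis
  proof (cases "a + 1 = c")
    case True
    then show ?thesis using S by (metis FF_Suc Suc_eq_plus1 diff_Suc_1)
  next
    case False
    have "F c * FF a (c - 1) = FF a (c - 1) * F c"
      using assms by (intro F_commute_FF) auto
    moreover have "FF a c = qbr (qi m (c - 1)) (FF a (c - 1)) (F (c - 1))"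
      using False assms by (intro FF_qbr_last) auto
    ultimately show ?thesis using S by (simp add: serre_qbr_right)
  qed
qed

lemma serre_F_FF_first:
  assumes "1 \<le> a" "a \<noteq> m" "a + 1 < b" "b \<le> m + n"
  shows "serre (qq + inverse qq) (F a) (FF (a + 1) b)"
proof -
  have S: "serre (qq + inverse qq) (F a) (F (a + 1))"
    using assms by (intro serre_F) auto
  show ?thesis
  proof (cases "b = a + 2")
    case True
    then show ?thesis using S by simp
  next
    case False
    have "F a * FF (a + 2) b = FF (a + 2) b * F a"
      using assms by (intro F_commute_FF) auto
    moreover have "FF (a + 1) b = qbr (qi m (a + 2)) (F (a + 1)) (FF (a + 2) b)"
      using False assms FF_qbr_first[of "a + 1" b] by simp
    ultimately show ?thesis using S by (simp add: serre_qbr_left)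
  qed
qed

text \<open>Peeling off an even end generator leaves an odd root vector satisfying a Serre relation with
  it, so \<open>qbr_square_zero\<close> applies.\<close>

lemma FF_square_zero:
  assumes "1 \<le> a" "a \<le> m" "m < b" "b \<le> m + n"
  shows "FF a b * FF a b = 0"
  using assms
proof (induction "b - a" arbitrary: a b rule: less_induct)
  case less
  consider "b = a + 1" | "m + 2 \<le> b" | "b = m + 1" "a < m"
    using less.prems by linarith
  then show ?case
  proof cases
    case 1
    with less.prems have "a = m" by simp
    with 1 show ?thesis using F_m_square by simp
  next
    case 2
    have "FF a (b - 1) * FF a (b - 1) = 0"
      using less.prems 2 by (intro less.hyps) auto
    moreover have "serre (qq + inverse qq) (F (b - 1)) (FF a (b - 1))"
      using less.prems 2 by (intro serre_F_FF_last) auto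
    ultimately show ?thesis
      using less.prems 2 qbr_square_zero(2)[OF _ _ qq_plus_inverse_nonzero qi_quadratic]
      by (simp add: FF_qbr_last[of a b])
  next
    case 3
    have "FF (a + 1) b * FF (a + 1) b = 0"
      using less.prems 3 by (intro less.hyps) auto
    moreover have "serre (qq + inverse qq) (F a) (FF (a + 1) b)"
      using less.prems 3 by (intro serre_F_FF_first) auto
    moreover have "FF a b = qbr (qi m (a + 1)) (F a) (FF (a + 1) b)"
      using 3 by (intro FF_qbr_first) simp
    ultimately show ?thesis
      using qbr_square_zero(1)[OF _ _ qq_plus_inverse_nonzero qi_quadratic] by simp
  qed
qed

lemma F_skew_commute_FF_around:
  assumes "1 < l" "l + 2 \<le> m + n"
  shows "\<exists>c. F l * FF (l - 1) (l + 2) = phi c * (FF (l - 1) (l + 2) * F l)"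
proof (cases "l = m")
  case True
  then have "FF (l - 1) (l + 2) * F l + F l * FF (l - 1) (l + 2) = 0"
    using assms F_quartic by simp
  then have "F l * FF (l - 1) (l + 2) = phi (- 1) * (FF (l - 1) (l + 2) * F l)"
    by (simp add: phi_minus eq_neg_iff_add_eq_0 add.commute)
  then show ?thesis ..
next
  case False
  have qi_eq: "qi m (l + 1) = qi m l" using False by (simp add: qi_def)
  have "FF (l - 1) (l + 2) = qbr (qi m l) (F (l - 1)) (qbr (qi m l) (F l) (F (l + 1)))"
    using assms FF_qbr_first[of "l - 1" "l + 2"] FF_qbr_first[of l "l + 2"] qi_eq by simp
  moreover have "F l * qbr (qi m l) (F (l - 1)) (qbr (qi m l) (F l) (F (l + 1)))
      = qbr (qi m l) (F (l - 1)) (qbr (qi m l) (F l) (F (l + 1))) * F l"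
  proof (rule commute_qbr_qbr_of_serre)
    show "serre (qi m l + inverse (qi m l)) (F l) (F (l - 1))"
      unfolding qi_plus_inverse using assms False by (intro serre_F) auto
    show "serre (qi m l + inverse (qi m l)) (F l) (F (l + 1))"
      unfolding qi_plus_inverse using assms False by (intro serre_F) auto
    show "F (l - 1) * F (l + 1) = F (l + 1) * F (l - 1)"
      using assms by (intro F_commute_far) auto
  qed (simp_all add: one_plus_qi_square_nonzero)
  ultimately have "F l * FF (l - 1) (l + 2) = phi 1 * (FF (l - 1) (l + 2) * F l)" by simp
  then show ?thesis ..
qed

lemma F_skew_commute_FF:
  assumes "1 \<le> a" "a < l" "l + 1 < b" "b \<le> m + n"
  shows "\<exists>c. F l * FF a b = phi c * (FF a b * F l)"
  using assms
proof (induction "b - a" arbitrary: a b rule: less_induct)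
  case less
  consider "a + 1 < l" | "a + 1 = l" "l + 2 < b" | "a + 1 = l" "b = l + 2"
    using less.prems by linarith
  then show ?case
  proof cases
    case 1
    have "\<exists>c. F l * FF (a + 1) b = phi c * (FF (a + 1) b * F l)"
      using less.prems 1 by (intro less.hyps) auto
    then obtain c where c: "F l * FF (a + 1) b = phi c * (FF (a + 1) b * F l)" ..
    have "F l * F a = phi 1 * (F a * F l)"
      using less.prems 1 F_commute_far[of l a] by simp
    from skew_commute_qbr[OF this c] show ?thesis
      using less.prems 1 FF_qbr_first[of a b] by auto
  next
    case 2
    have "\<exists>c. F l * FF a (b - 1) = phi c * (FF a (b - 1) * F l)"
      using less.prems 2 by (intro less.hyps) auto
    then obtain c where c: "F l * FF a (b - 1) = phi c * (FF a (b - 1) * F l)" ..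
    have "F l * F (b - 1) = phi 1 * (F (b - 1) * F l)"
      using less.prems 2 F_commute_far[of l "b - 1"] by simp
    from skew_commute_qbr[OF c this] show ?thesis
      using less.prems 2 FF_qbr_last[of a b] by auto
  next
    case 3
    then show ?thesis using less.prems F_skew_commute_FF_around[of l] by auto
  qed
qed

lemma FF_skew_commute_nested:
  assumes "1 \<le> a" "a < c" "c < d" "d < b" "b \<le> m + n"
  shows "\<exists>e. FF c d * FF a b = phi e * (FF a b * FF c d)"
proof -
  from assms have "c \<le> d - 1" by simp
  then show ?thesis using assms(2)
  proof (induction c rule: inc_induct)
    case base
    define d' where "d' = d - 1"
    have "d = Suc d'" using assms by (simp add: d'_def)
    then show ?case using assms F_skew_commute_FF[of a d' b] by auto
  next
    case (step p)
    obtain e where e: "FF (Suc p) d * FF a b = phi e * (FF a b * FF (Suc p) d)"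
      using step by auto
    have "\<exists>e'. F p * FF a b = phi e' * (FF a b * F p)"
      using assms step by (intro F_skew_commute_FF) auto
    then obtain e' where e': "F p * FF a b = phi e' * (FF a b * F p)" ..
    from qbr_skew_commute[OF e' e] show ?case
      using step FF_qbr_first[of p d] by auto
  qed
qed

lemma FF_skew_commute_same_end:
  assumes "1 \<le> p" "p < i" "i \<le> m" "m < k" "k \<le> m + n"
  shows "\<exists>c. c \<noteq> 0 \<and> FF i k * FF p k = phi c * (FF p k * FF i k)"
proof -
  from assms have "p \<le> i - 1" by simp
  then show ?thesis using assms(1)
  proof (induction p rule: inc_induct)
    case base
    define i' where "i' = i - 1"
    have i: "i = Suc i'" using assms by (simp add: i'_def)
    have "FF i k * FF i k = 0" using assms by (intro FF_square_zero) auto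
    from square_zero_skew_commute_qbr[OF this, of "qi m i" "F i'"] show ?case
      using assms i FF_qbr_first[of i' k] by (auto intro!: exI[of _ "- qi m i"])
  next
    case (step r)
    obtain c where c: "c \<noteq> 0" "FF i k * FF (Suc r) k = phi c * (FF (Suc r) k * FF i k)"
      using step by auto
    have "F r * FF i k = FF i k * F r"
      using assms step by (intro F_commute_FF) auto
    then have "FF i k * F r = phi 1 * (F r * FF i k)" by simp
    from skew_commute_qbr[OF this c(2)] show ?case
      using c(1) assms step FF_qbr_first[of r k] by auto
  qed
qed

lemma FF_exchange:
  assumes "1 \<le> i" "i < l" "l \<le> m" "m < k" "k < m + n"
  shows "\<exists>a b. FF i k * FF l (k + 1) = phi a * (FF l (k + 1) * FF i k) + phi b * (FF i (k + 1) * FF l k)"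
proof -
  obtain c where c0: "c \<noteq> 0" and "FF l k * FF i k = phi c * (FF i k * FF l k)"
    using FF_skew_commute_same_end[of i l k] assms by auto
  from skew_commute_inverse[OF this(2) c0]
  have c: "FF i k * FF l k = phi (inverse c) * (FF l k * FF i k)" .
  obtain d where d: "FF l k * FF i (k + 1) = phi d * (FF i (k + 1) * FF l k)"
    using FF_skew_commute_nested[of i l k "k + 1"] assms by auto
  have i: "FF i (k + 1) = qbr (qi m k) (FF i k) (F k)" and l: "FF l (k + 1) = qbr (qi m k) (FF l k) (F k)"
    using assms FF_qbr_last[of i "k + 1"] FF_qbr_last[of l "k + 1"] by simp_all
  show ?thesis
    using qbr_exchange[OF c d[unfolded i] qi_nonzero] unfolding i l by blast
qed

section \<open>The even generators \<open>E\<^sub>k\<close> and \<open>F\<^sub>I\<^sub>1\<close>\<close>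

lemma F_prev_H:
  assumes "2 \<le> k" "k < m + n"
  shows "F (k - 1) * H k = phi (inverse (qi m k)) * (H k * F (k - 1))"
proof -
  obtain k' where "k = Suc k'" "1 \<le> k'" using assms by (cases k) auto
  then show ?thesis using F_H[of k k'] assms by (simp add: kexp_def power_int_minus)
qed

lemma F_prev_Hinv:
  assumes "2 \<le> k" "k < m + n"
  shows "F (k - 1) * Hinv k = phi (qi m k) * (Hinv k * F (k - 1))"
proof -
  obtain k' where "k = Suc k'" "1 \<le> k'" using assms by (cases k) auto
  then show ?thesis using F_Hinv[of k k'] assms by (simp add: kexp_def power_int_minus)
qed

lemma F_Hinv_far:
  assumes "1 \<le> p" "p + 2 \<le> k" "k < m + n"
  shows "F p * Hinv k = Hinv k * F p"
  using F_Hinv[of k p] assms by (simp add: kexp_def)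

lemma FF_next_H:
  assumes "1 \<le> k" "k + 1 < j" "j \<le> m + n"
  shows "FF (k + 1) j * H k = phi (inverse (qi m (k + 1))) * (H k * FF (k + 1) j)"
proof -
  have "FF (k + 1) j * H k
      = phi (\<Prod>l\<in>{k+1..<j}. if l = k + 1 then inverse (qi m (k + 1)) else 1) * (H k * FF (k + 1) j)"
  proof (rule FF_skew_commute)
    fix l assume "k + 1 \<le> l" "l < j"
    then show "F l * H k = phi (if l = k + 1 then inverse (qi m (k + 1)) else 1) * (H k * F l)"
      using F_H[of k l] assms by (auto simp: kexp_def power_int_minus)
  qed (use assms in simp)
  then show ?thesis using assms by simp
qed

lemma FF_next_Hinv:
  assumes "1 \<le> k" "k + 1 < j" "j \<le> m + n"
  shows "FF (k + 1) j * Hinv k = phi (qi m (k + 1)) * (Hinv k * FF (k + 1) j)"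
proof -
  have "FF (k + 1) j * Hinv k
      = phi (\<Prod>l\<in>{k+1..<j}. if l = k + 1 then qi m (k + 1) else 1) * (Hinv k * FF (k + 1) j)"
  proof (rule FF_skew_commute)
    fix l assume "k + 1 \<le> l" "l < j"
    then show "F l * Hinv k = phi (if l = k + 1 then qi m (k + 1) else 1) * (Hinv k * F l)"
      using F_Hinv[of k l] assms by (auto simp: kexp_def power_int_minus)
  qed (use assms in simp)
  then show ?thesis using assms by simp
qed

lemma E_commute_FF:
  assumes "1 \<le> k" "k < m + n" "1 \<le> i" "j \<le> m + n" "k < i \<or> j \<le> k"
  shows "E k * FF i j = FF i j * E k"
  by (rule FF_commute) (use assms in \<open>auto intro!: E_F_commute\<close>)

lemma E_commutator_FF_first:
  assumes "1 \<le> k" "k \<noteq> m" "k + 2 \<le> j" "j \<le> m + n"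
  shows "\<exists>c. E k * FF k j = FF k j * E k + phi c * (H k * FF (k + 1) j)"
proof -
  have "E k * FF (k + 1) j = FF (k + 1) j * E k"
    using assms by (intro E_commute_FF) auto
  from commutator_qbr_left_cartan[OF E_F_same this FF_next_H FF_next_Hinv] show ?thesis
    using assms FF_qbr_first[of k j] by auto
qed

lemma E_commute_FF_inner:
  assumes "1 \<le> i" "i < k" "k \<noteq> m" "k + 2 \<le> j" "j \<le> m + n"
  shows "E k * FF i j = FF i j * E k"
proof -
  from assms have "i \<le> k - 1" by simp
  then show ?thesis using assms(1)
  proof (induction i rule: inc_induct)
    case base
    define k' where "k' = k - 1"
    have k: "k = Suc k'" using assms by (simp add: k'_def)
    obtain c where c: "E k * FF k j = FF k j * E k + phi c * (H k * FF (k + 1) j)"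
      using assms E_commutator_FF_first[of k j] by auto
    have "E k * F k' = F k' * E k" using assms k by (intro E_F_commute) auto
    moreover have "F k' * FF (k + 1) j = FF (k + 1) j * F k'"
      using assms k by (intro F_commute_FF) auto
    ultimately show ?case
      using commute_qbr_cancel_correction[OF _ c _ _ qi_nonzero] F_prev_H[of k] assms k
        FF_qbr_first[of k' j] by simp
  next
    case (step r)
    have "E k * F r = F r * E k" using assms step by (intro E_F_commute) auto
    with step show ?case using assms FF_qbr_first[of r j] by (simp add: commute_qbr)
  qed
qed

lemma E_commutator_FF_last:
  assumes "1 \<le> p" "p < k" "k \<noteq> m" "k < m + n"
  shows "\<exists>g. E k * FF p (k + 1) = FF p (k + 1) * E k + phi g * (Hinv k * FF p k)"
proof -
  from assms have "p \<le> k - 1" by simp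
  then show ?thesis using assms(1)
  proof (induction p rule: inc_induct)
    case base
    define k' where "k' = k - 1"
    have k: "k = Suc k'" using assms by (simp add: k'_def)
    have "E k * F k' = F k' * E k" using assms k by (intro E_F_commute) auto
    from commutator_qbr_right_cartan[OF this E_F_same _ _ qi_nonzero] show ?case
      using F_prev_H[of k] F_prev_Hinv[of k] assms k FF_qbr_first[of k' "k + 1"] by auto
  next
    case (step r)
    obtain g where g: "E k * FF (Suc r) (k + 1) = FF (Suc r) (k + 1) * E k + phi g * (Hinv k * FF (Suc r) k)"
      using step by auto
    have "E k * F r = F r * E k" using assms step by (intro E_F_commute) auto
    from commutator_qbr_propagate[OF this g F_Hinv_far] show ?case
      using assms step FF_qbr_first[of r "k + 1"] FF_qbr_first[of r k] by auto
  qed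
qed

definition block_from :: "nat \<Rightarrow> nat \<Rightarrow> 'a" where
  "block_from l j = prod_list (map (\<lambda>p. FF p j) [l..<m + 1])"

lemma block_from_Cons: "l \<le> m \<Longrightarrow> block_from l j = FF l j * block_from (l + 1) j"
  by (simp add: block_from_def upt_conv_Cons del: upt_Suc)

lemma block_from_end [simp]: "block_from (Suc m) j = 1"
  by (simp add: block_from_def)

lemma commute_block_from:
  assumes "\<And>p. l \<le> p \<Longrightarrow> p \<le> m \<Longrightarrow> X * FF p j = FF p j * X"
  shows "X * block_from l j = block_from l j * X"
  unfolding block_from_def by (rule commute_prod_list) (auto intro: assms)

lemma FI1_blocks: "FI1 phi m n F = prod_list (map (block_from 1) (rev [m + 1..<m + n + 1]))"
proof -
  have "prod_list (concat xss) = prod_list (map prod_list xss)" for xss :: "'a list list"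
    by (induction xss) auto
  then show ?thesis
    by (simp add: FI1_def I1_list_def block_from_def[abs_def] map_concat comp_def del: upt_Suc)
qed

lemma FF_block_from_zero:
  assumes "1 \<le> r" "r \<le> i" "i \<le> m" "m < k" "k \<le> m + n"
  shows "FF i k * block_from r k = 0"
  using assms(2,1)
proof (induction r rule: inc_induct)
  case base
  have "FF i k * FF i k = 0" using assms by (intro FF_square_zero) auto
  then show ?case using assms block_from_Cons[of i k] by (simp add: mult.assoc[symmetric])
next
  case (step r)
  obtain c where c: "FF i k * FF r k = phi c * (FF r k * FF i k)"
    using step assms FF_skew_commute_same_end[of r i k] by auto
  show ?case
    using step assms block_from_Cons[of r k] by (simp add: mult_assoc_eq[OF c] mult.assoc)
qed

lemma FF_block_pair_zero:
  assumes "1 \<le> i" "i < l" "l \<le> m + 1" "m < k" "k < m + n"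
  shows "FF i k * (block_from l (k + 1) * block_from 1 k) = 0"
  using assms(3,2,1)
proof (induction l arbitrary: i rule: inc_induct)
  case base
  then show ?case using assms FF_block_from_zero[of 1 i k] by simp
next
  case (step l)
  obtain a b where ab: "FF i k * FF l (k + 1) = phi a * (FF l (k + 1) * FF i k) + phi b * (FF i (k + 1) * FF l k)"
    using step assms FF_exchange[of i l k] by auto
  let ?R = "block_from (l + 1) (k + 1) * block_from 1 k"
  have "FF i k * (block_from l (k + 1) * block_from 1 k) = FF i k * FF l (k + 1) * ?R"
    using step by (simp add: block_from_Cons mult.assoc)
  also have "\<dots> = phi a * (FF l (k + 1) * (FF i k * ?R)) + phi b * (FF i (k + 1) * (FF l k * ?R))"
    unfolding ab by (simp add: distrib_right mult.assoc)
  also have "\<dots> = 0" using step by simp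
  finally show ?case .
qed

lemma E_commute_block:
  assumes "1 \<le> k" "k < m" "m < j" "j \<le> m + n"
  shows "E k * block_from 1 j = block_from 1 j * E k"
proof -
  have "E k * block_from l j = block_from l j * E k" if "1 \<le> l" "l \<le> m + 1" for l
    using that(2,1)
  proof (induction l rule: inc_induct)
    case (step l)
    consider "l < k" | "l = k" | "k < l" by linarith
    then show ?case
    proof cases
      case 1
      then have "E k * FF l j = FF l j * E k"
        using assms step by (intro E_commute_FF_inner) auto
      then show ?thesis using step block_from_Cons[of l j] by (simp add: commute_mult)
    next
      case 2
      obtain c where c: "E k * FF k j = FF k j * E k + phi c * (H k * FF (k + 1) j)"
        using assms E_commutator_FF_first[of k j] by auto
      have "FF (k + 1) j * FF (k + 1) j = 0" using assms by (intro FF_square_zero) auto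
      then have "FF (k + 1) j * block_from (k + 1) j = 0"
        using assms block_from_Cons[of "k + 1" j] by (simp add: mult.assoc[symmetric])
      from commute_mult_annihilated_correction[OF c[unfolded mult.assoc[symmetric]] this]
      show ?thesis using step 2 block_from_Cons[of k j] by simp
    next
      case 3
      then have "E k * FF l j = FF l j * E k"
        using assms step by (intro E_commute_FF) auto
      then show ?thesis using step block_from_Cons[of l j] by (simp add: commute_mult)
    qed
  qed simp
  then show ?thesis using assms by simp
qed

lemma E_commute_block_pair:
  assumes "m < k" "k < m + n"
  shows "E k * (block_from 1 (k + 1) * block_from 1 k) = block_from 1 (k + 1) * block_from 1 k * E k"
proof -
  have "E k * (block_from l (k + 1) * block_from 1 k) = block_from l (k + 1) * block_from 1 k * E k"
    if "1 \<le> l" "l \<le> m + 1" for l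
    using that(2,1)
  proof (induction l rule: inc_induct)
    case base
    have "E k * block_from 1 k = block_from 1 k * E k"
      using assms by (intro commute_block_from E_commute_FF) auto
    then show ?case by simp
  next
    case (step l)
    obtain g where g: "E k * FF l (k + 1) = FF l (k + 1) * E k + phi g * (Hinv k * FF l k)"
      using assms step E_commutator_FF_last[of l k] by auto
    have "FF l k * (block_from (l + 1) (k + 1) * block_from 1 k) = 0"
      using assms step by (intro FF_block_pair_zero) auto
    from commute_mult_annihilated_correction[OF g[unfolded mult.assoc[symmetric]] this]
    show ?case using step block_from_Cons[of l "k + 1"] by (simp add: mult.assoc)
  qed
  then show ?thesis by simp
qed

lemma E_commute_FI1:
  assumes "1 \<le> k" "k < m + n" "k \<noteq> m"
  shows "E k * FI1 phi m n F = FI1 phi m n F * E k"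
proof (cases "k < m")
  case True
  show ?thesis unfolding FI1_blocks
  proof (rule commute_prod_list)
    fix x assume "x \<in> set (map (block_from 1) (rev [m + 1..<m + n + 1]))"
    then obtain j where "x = block_from 1 j" "m < j" "j \<le> m + n" by auto
    then show "E k * x = x * E k" using assms True E_commute_block[of k j] by simp
  qed
next
  case False
  with assms have "m < k" by simp
  let ?A = "prod_list (map (block_from 1) (rev [k + 2..<m + n + 1]))"
    and ?C = "prod_list (map (block_from 1) (rev [m + 1..<k]))"
  have "FI1 phi m n F = ?A * (block_from 1 (k + 1) * block_from 1 k) * ?C"
    using assms \<open>m < k\<close> rev_upt_split_pair[of "m + 1" k "m + n + 1"]
    by (simp add: FI1_blocks mult.assoc del: upt_Suc)
  moreover have "E k * ?A = ?A * E k"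
    using assms \<open>m < k\<close>
    by (intro commute_prod_list) (auto intro!: commute_block_from E_commute_FF_inner)
  moreover have "E k * ?C = ?C * E k"
    using assms \<open>m < k\<close>
    by (intro commute_prod_list) (auto intro!: commute_block_from E_commute_FF)
  ultimately show ?thesis
    using E_commute_block_pair \<open>m < k\<close> assms by (simp add: commute_mult)
qed

end

theorem lemma5p8:
  fixes m n :: nat
    and phi :: "ratq \<Rightarrow> 'a::ring_1"
    and K Kinv E F :: "nat \<Rightarrow> 'a"
  assumes "1 \<le> m" and "1 \<le> n"
    and "uq_rels m n phi K Kinv E F"
    and "(i, j) \<in> I0 m n"
  shows "Eij phi m E i j * FI1 phi m n F = FI1 phi m n F * Eij phi m E i j"
proof -
  interpret uq_algebra m n phi K Kinv E F
    using assms(3) by (rule uq_algebra.intro)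
  have "i < j" "1 \<le> i" "j \<le> m + n" "\<And>l. i \<le> l \<Longrightarrow> l < j \<Longrightarrow> l \<noteq> m"
    using assms(4) unfolding I0_def by auto
  then have "Eroot phi m E i (j - i) * FI1 phi m n F = FI1 phi m n F * Eroot phi m E i (j - i)"
    by (intro Eroot_commute phi_central E_commute_FI1) auto
  then show ?thesis by (simp add: Eij_def)
qed

end
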